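(* Let $a<b$ and let $f:[a,b]\rightarrow\mathbb{R}$ be a twice continuously differentiable mapping in $(a,b)$ with $f''\in L^2[a,b]$. Then \[ \left|\frac{f(a)+f(b)}{2}-\frac{1}{b-a}\int_{a}^{b}f(t)\,dt\right|\leq \frac{(b-a)^{3/2}}{2\sqrt{3}\pi}\|f''\|_2. \]
   Context: $\|g\|_2=\left(\int_a^b g(t)^2\,dt\right)^{1/2}$. *)

theory Defs
  imports "HOL-Analysis.Analysis"
begin

definition L2_norm_on :: "real \<Rightarrow> real \<Rightarrow> (real \<Rightarrow> real) \<Rightarrow> real" where
  "L2_norm_on a b g = sqrt (integral {a..b} (\<lambda>t. (g t)^2))"

end

theory Submission
  imports Defs
begin

text \<open>
  With the Peano kernel \<open>K t = (t - a) (b - t) / 2\<close>, two integrations by parts give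
  \<open>(b - a)/2 (f a + f b) - \<integral>\<^sub>a\<^sup>b f = \<integral>\<^sub>a\<^sup>b K f''\<close>, and Cauchy--Schwarz bounds the right-hand side by
  \<open>\<parallel>K\<parallel>\<^sub>2 \<parallel>f''\<parallel>\<^sub>2 = ((b - a)\<^sup>5/120)\<^sup>1\<^sup>/\<^sup>2 \<parallel>f''\<parallel>\<^sub>2\<close>; the claim follows from \<open>12 \<pi>\<^sup>2 \<le> 120\<close>.
  The boundary terms \<open>K f'\<close> vanish because \<open>f'' \<in> L\<^sup>2\<close> makes \<open>f'\<close> Hoelder continuous of
  order 1/2, hence bounded on \<open>(a, b)\<close>.
\<close>

definition trapezoid_kernel :: "real \<Rightarrow> real \<Rightarrow> real \<Rightarrow> real" where
  "trapezoid_kernel a b t = (t - a) * (b - t) / 2"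

lemma integral_mult_square_le:
  fixes u v :: "real \<Rightarrow> real"
  assumes iu: "(\<lambda>t. (u t)^2) integrable_on S" and iv: "(\<lambda>t. (v t)^2) integrable_on S"
    and iuv: "(\<lambda>t. u t * v t) integrable_on S" and pos: "integral S (\<lambda>t. (u t)^2) > 0"
  shows "(integral S (\<lambda>t. u t * v t))^2 \<le> integral S (\<lambda>t. (u t)^2) * integral S (\<lambda>t. (v t)^2)"
proof -
  define A where "A = integral S (\<lambda>t. (u t)^2)"
  define B where "B = integral S (\<lambda>t. (v t)^2)"
  define I where "I = integral S (\<lambda>t. u t * v t)"
  define s where "s = - I / A"
  have i1: "(\<lambda>t. s^2 * (u t)^2) integrable_on S"
    using integrable_on_cmult_left[OF iu, of "s^2"] by simp
  have i2: "(\<lambda>t. 2 * s * (u t * v t)) integrable_on S"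
    using integrable_on_cmult_left[OF iuv, of "2 * s"] by simp
  have i12: "(\<lambda>t. s^2 * (u t)^2 + 2 * s * (u t * v t)) integrable_on S"
    using i1 i2 by (rule integrable_add)
  have "0 \<le> integral S (\<lambda>t. s^2 * (u t)^2 + 2 * s * (u t * v t) + (v t)^2)"
  proof (rule integral_nonneg)
    show "(\<lambda>t. s^2 * (u t)^2 + 2 * s * (u t * v t) + (v t)^2) integrable_on S"
      using i12 iv by (rule integrable_add)
    fix x
    have "s^2 * (u x)^2 + 2 * s * (u x * v x) + (v x)^2 = (s * u x + v x)^2" by algebra
    then show "0 \<le> s^2 * (u x)^2 + 2 * s * (u x * v x) + (v x)^2" by simp
  qed
  also have "\<dots> = s^2 * A + 2 * s * I + B"
    using i1 i2 i12 iv iu iuv by (simp add: integral_add A_def B_def I_def)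
  also have "\<dots> = B - I^2 / A"
    using pos unfolding s_def A_def[symmetric] by (simp add: field_simps power2_eq_square)
  finally have "I^2 / A \<le> B" by simp
  then show ?thesis
    using pos unfolding A_def[symmetric] B_def[symmetric] I_def[symmetric]
    by (simp add: divide_le_eq mult.commute)
qed

lemma abs_diff_le_sqrt_integral_square_derivative:
  fixes g g' :: "real \<Rightarrow> real"
  assumes "c \<le> d"
    and deriv: "\<And>x. x \<in> {c..d} \<Longrightarrow> (g has_real_derivative g' x) (at x within {c..d})"
    and sq: "(\<lambda>t. (g' t)^2) integrable_on {c..d}"
  shows "\<bar>g d - g c\<bar> \<le> sqrt ((d - c) * integral {c..d} (\<lambda>t. (g' t)^2))"
proof (cases "c = d")
  case False
  then have "c < d" using \<open>c \<le> d\<close> by simp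
  have ftc: "(g' has_integral (g d - g c)) {c..d}"
    using \<open>c \<le> d\<close> deriv
    by (intro fundamental_theorem_of_calculus) (auto simp: has_real_derivative_iff_has_vector_derivative)
  have "(integral {c..d} (\<lambda>t. 1 * g' t))^2
          \<le> integral {c..d} (\<lambda>t. 1^2) * integral {c..d} (\<lambda>t. (g' t)^2)"
    by (rule integral_mult_square_le) (use sq ftc \<open>c < d\<close> in \<open>auto simp: has_integral_iff\<close>)
  then have "(g d - g c)^2 \<le> (d - c) * integral {c..d} (\<lambda>t. (g' t)^2)"
    using ftc \<open>c < d\<close> by (auto simp: has_integral_iff)
  then show ?thesis by (metis real_sqrt_abs real_sqrt_le_mono)
qed simp

lemma bounded_if_square_integrable_derivative:
  fixes g g' :: "real \<Rightarrow> real"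
  assumes deriv: "\<And>x. x \<in> {a<..<b} \<Longrightarrow> (g has_real_derivative g' x) (at x)"
    and sq: "(\<lambda>t. (g' t)^2) integrable_on {a..b}"
  obtains M where "\<And>t. t \<in> {a<..<b} \<Longrightarrow> \<bar>g t\<bar> \<le> M"
proof (cases "a < b")
  case True
  define B where "B = integral {a..b} (\<lambda>t. (g' t)^2)"
  define m where "m = (a + b) / 2"
  have m: "m \<in> {a<..<b}" using True by (simp add: m_def)
  have diff: "\<bar>g d - g c\<bar> \<le> sqrt ((b - a) * B)"
    if "c \<in> {a<..<b}" "d \<in> {a<..<b}" "c \<le> d" for c d
  proof -
    have sub: "{c..d} \<subseteq> {a..b}" using that by auto
    have sq_cd: "(\<lambda>t. (g' t)^2) integrable_on {c..d}"
      using sq by (rule integrable_subinterval_real) (use sub in simp)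
    have "integral {c..d} (\<lambda>t. (g' t)^2) \<le> B"
      unfolding B_def by (rule integral_subset_le) (use sq_cd sq sub in auto)
    moreover have "0 \<le> integral {c..d} (\<lambda>t. (g' t)^2)" by (rule integral_nonneg[OF sq_cd]) simp
    ultimately have "(d - c) * integral {c..d} (\<lambda>t. (g' t)^2) \<le> (b - a) * B"
      using that by (intro mult_mono) auto
    moreover have "\<bar>g d - g c\<bar> \<le> sqrt ((d - c) * integral {c..d} (\<lambda>t. (g' t)^2))"
      using that sub sq_cd deriv
      by (intro abs_diff_le_sqrt_integral_square_derivative)
         (auto intro: has_field_derivative_at_within)
    ultimately show ?thesis by (meson order_trans real_sqrt_le_mono)
  qed
  show ?thesis
  proof
    fix t assume t: "t \<in> {a<..<b}"
    have "\<bar>g t - g m\<bar> \<le> sqrt ((b - a) * B)"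
      using diff[OF t m] diff[OF m t] by (cases "t \<le> m") (auto simp: abs_minus_commute)
    then show "\<bar>g t\<bar> \<le> \<bar>g m\<bar> + sqrt ((b - a) * B)" by linarith
  qed
qed auto

lemma continuous_on_Icc_vanishing_times_bounded:
  fixes K g :: "real \<Rightarrow> real"
  assumes contK: "continuous_on {a..b} K" and "K a = 0" "K b = 0"
    and contg: "continuous_on {a<..<b} g" and bound: "\<And>t. t \<in> {a<..<b} \<Longrightarrow> \<bar>g t\<bar> \<le> M"
  shows "continuous_on {a..b} (\<lambda>t. if t \<in> {a<..<b} then K t * g t else 0)"
    (is "continuous_on _ ?G")
proof -
  have "continuous (at x within {a..b}) ?G" if x: "x \<in> {a..b}" for x
  proof (cases "x \<in> {a<..<b}")
    case True
    have "continuous_on {a<..<b} (\<lambda>t. K t * g t)"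
      using contg contK by (intro continuous_intros) (auto elim: continuous_on_subset)
    then have "continuous_on {a<..<b} ?G" by (rule continuous_on_cong[THEN iffD1, rotated -1]) auto
    then show ?thesis
      using True by (simp add: continuous_on_eq_continuous_at continuous_at_imp_continuous_within)
  next
    case False
    then have "K x = 0" "?G x = 0" using x \<open>K a = 0\<close> \<open>K b = 0\<close> by auto
    have "((\<lambda>t. \<bar>M\<bar> * \<bar>K t\<bar>) \<longlongrightarrow> \<bar>M\<bar> * \<bar>K x\<bar>) (at x within {a..b})"
      using contK x by (intro tendsto_intros) (simp add: continuous_on_def)
    then have "((\<lambda>t. \<bar>M\<bar> * \<bar>K t\<bar>) \<longlongrightarrow> 0) (at x within {a..b})" using \<open>K x = 0\<close> by simp
    moreover have "norm (?G t) \<le> \<bar>M\<bar> * \<bar>K t\<bar>" for t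
      using bound[of t] by (auto simp: abs_mult) (metis abs_ge_zero mult.commute mult_left_mono)
    then have "\<forall>\<^sub>F t in at x within {a..b}. norm (?G t) \<le> \<bar>M\<bar> * \<bar>K t\<bar>" by simp
    ultimately have "(?G \<longlongrightarrow> 0) (at x within {a..b})" by (rule Lim_null_comparison[rotated])
    then show ?thesis using \<open>?G x = 0\<close> by (simp add: continuous_within)
  qed
  then show ?thesis by (simp add: continuous_on_eq_continuous_within)
qed

lemma trapezoid_error_has_integral:
  fixes f f' f'' :: "real \<Rightarrow> real"
  assumes "a \<le> b"
    and contf: "continuous_on {a..b} f"
    and df: "\<And>x. x \<in> {a<..<b} \<Longrightarrow> (f has_real_derivative f' x) (at x)"
    and df': "\<And>x. x \<in> {a<..<b} \<Longrightarrow> (f' has_real_derivative f'' x) (at x)"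
    and bound: "\<And>t. t \<in> {a<..<b} \<Longrightarrow> \<bar>f' t\<bar> \<le> M"
  shows "((\<lambda>t. trapezoid_kernel a b t * f'' t)
           has_integral ((b - a) / 2 * (f a + f b) - integral {a..b} f)) {a..b}"
proof -
  define K where "K = trapezoid_kernel a b"
  define dK where "dK t = (a + b - 2 * t) / 2" for t
  define G where "G t = (if t \<in> {a<..<b} then K t * f' t else 0)" for t
  define F where "F t = G t - dK t * f t - integral {a..t} f" for t
  have contG: "continuous_on {a..b} G"
    unfolding G_def K_def trapezoid_kernel_def using df' bound
    by (intro continuous_on_Icc_vanishing_times_bounded continuous_intros
        continuous_at_imp_continuous_on ballI DERIV_isCont) auto
  have contF: "continuous_on {a..b} F"
    unfolding F_def dK_def
    by (intro continuous_intros contG contf indefinite_integral_continuous_1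
        integrable_continuous_interval) auto
  have "(F has_real_derivative K x * f'' x) (at x)" if x: "x \<in> {a<..<b}" for x
  proof -
    have dK: "(K has_real_derivative dK x) (at x)"
      unfolding K_def dK_def trapezoid_kernel_def
      by (auto intro!: derivative_eq_intros simp: field_simps)
    have "((\<lambda>t. K t * f' t) has_real_derivative dK x * f' x + K x * f'' x) (at x)"
      using DERIV_mult[OF dK df'[OF x]] by (simp add: mult.commute)
    then have dG: "(G has_real_derivative dK x * f' x + K x * f'' x) (at x)"
      by (rule has_field_derivative_transform_within_open[OF _ _ x]) (auto simp: G_def)
    have "((\<lambda>t. dK t * f t) has_real_derivative - f x + dK x * f' x) (at x)"
      unfolding dK_def using df[OF x]
      by (auto intro!: derivative_eq_intros simp: field_simps)
    moreover have "((\<lambda>u. integral {a..u} f) has_real_derivative f x) (at x)"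
      using integral_has_vector_derivative[OF contf, of x] x
      by (simp add: at_within_Icc_at has_real_derivative_iff_has_vector_derivative)
    ultimately have "(F has_real_derivative dK x * f' x + K x * f'' x - (- f x + dK x * f' x) - f x) (at x)"
      unfolding F_def by (intro DERIV_diff dG)
    then show ?thesis by simp
  qed
  then have "((\<lambda>t. K t * f'' t) has_integral (F b - F a)) {a..b}"
    using \<open>a \<le> b\<close> contF
    by (intro fundamental_theorem_of_calculus_interior)
       (auto simp: has_real_derivative_iff_has_vector_derivative)
  moreover have "F b - F a = (b - a) / 2 * (f a + f b) - integral {a..b} f"
    by (simp add: F_def G_def dK_def field_simps)
  ultimately show ?thesis by (simp add: K_def)
qed

lemma trapezoid_kernel_square_has_integral:
  assumes "a \<le> b"
  shows "((\<lambda>t. (trapezoid_kernel a b t)^2) has_integral (b - a)^5 / 120) {a..b}"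
proof -
  define P where "P t = ((b-a)^2*(t-a)^3/3 - (b-a)*(t-a)^4/2 + (t-a)^5/5)/4" for t
  have "((\<lambda>t. (trapezoid_kernel a b t)^2) has_integral (P b - P a)) {a..b}"
  proof (rule fundamental_theorem_of_calculus)
    fix x
    have "(P has_real_derivative (trapezoid_kernel a b x)^2) (at x within {a..b})"
      unfolding P_def trapezoid_kernel_def
      by (auto intro!: derivative_eq_intros simp: eval_nat_numeral) (simp add: field_simps; algebra)
    then show "(P has_vector_derivative (trapezoid_kernel a b x)^2) (at x within {a..b})"
      by (simp add: has_real_derivative_iff_has_vector_derivative)
  qed fact
  moreover have "P b - P a = (b - a)^5 / 120" by (simp add: P_def field_simps) algebra
  ultimately show ?thesis by simp
qed

lemma trapezoid_error_le_L2_norm: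
  fixes f f' f'' :: "real \<Rightarrow> real"
  assumes "a \<le> b"
    and "continuous_on {a..b} f"
    and "\<And>x. x \<in> {a<..<b} \<Longrightarrow> (f has_real_derivative f' x) (at x)"
    and df': "\<And>x. x \<in> {a<..<b} \<Longrightarrow> (f' has_real_derivative f'' x) (at x)"
    and sq: "(\<lambda>t. (f'' t)^2) integrable_on {a..b}"
  shows "\<bar>(b - a) / 2 * (f a + f b) - integral {a..b} f\<bar> \<le> sqrt ((b - a)^5 / 120) * L2_norm_on a b f''"
proof (cases "a = b")
  case False
  then have "a < b" using \<open>a \<le> b\<close> by simp
  obtain M where "\<And>t. t \<in> {a<..<b} \<Longrightarrow> \<bar>f' t\<bar> \<le> M"
    using bounded_if_square_integrable_derivative[OF df' sq] by blast
  then have E: "((\<lambda>t. trapezoid_kernel a b t * f'' t)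
                  has_integral ((b - a) / 2 * (f a + f b) - integral {a..b} f)) {a..b}"
    using assms by (intro trapezoid_error_has_integral)
  note K = trapezoid_kernel_square_has_integral[OF \<open>a \<le> b\<close>]
  have "(integral {a..b} (\<lambda>t. trapezoid_kernel a b t * f'' t))^2
          \<le> integral {a..b} (\<lambda>t. (trapezoid_kernel a b t)^2) * integral {a..b} (\<lambda>t. (f'' t)^2)"
    using \<open>a < b\<close>
    by (intro integral_mult_square_le has_integral_integrable[OF E] has_integral_integrable[OF K] sq)
       (simp add: integral_unique[OF K])
  then have "((b - a) / 2 * (f a + f b) - integral {a..b} f)^2
               \<le> (b - a)^5 / 120 * integral {a..b} (\<lambda>t. (f'' t)^2)"
    by (simp only: integral_unique[OF E] integral_unique[OF K])
  then show ?thesis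
    unfolding L2_norm_on_def by (metis real_sqrt_abs real_sqrt_le_mono real_sqrt_mult)
qed simp

lemma sqrt_fifth_power_div_120_le:
  assumes "h > 0"
  shows "sqrt (h^5 / 120) / h \<le> h powr (3/2) / (2 * sqrt 3 * pi)"
proof -
  have "pi * pi \<le> (315/100) * (315/100)"
    using pi_approx(2) pi_gt_zero by (intro mult_mono) auto
  then have pi_sq: "12 * pi^2 \<le> 120" by (simp add: power2_eq_square)
  have "sqrt 12 = 2 * sqrt 3"
    using real_sqrt_mult[of "2^2" 3] by simp
  then have denom: "2 * sqrt 3 * pi = sqrt (12 * pi^2)"
    using pi_gt_zero by (simp add: real_sqrt_mult)
  have "h powr (3/2) = sqrt (h^3)"
  proof -
    have "sqrt (h^3) = (h powr 3) powr (1/2)"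
      using assms by (simp add: powr_half_sqrt powr_realpow)
    then show ?thesis by (simp add: powr_powr)
  qed
  moreover have "sqrt (h^5 / 120) / h = sqrt (h^3 / 120)"
  proof -
    have "h^5 / 120 = h^2 * (h^3 / 120)" by (simp add: eval_nat_numeral)
    then show ?thesis using assms by (simp only: real_sqrt_mult) simp
  qed
  moreover have "sqrt (h^3 / 120) \<le> sqrt (h^3 / (12 * pi^2))"
    using pi_sq assms by (intro real_sqrt_le_mono divide_left_mono) auto
  ultimately show ?thesis by (simp add: denom real_sqrt_divide)
qed

theorem corollary2p6:
  fixes f f' f'' :: "real \<Rightarrow> real" and a b :: real
  assumes "a < b"
    and "continuous_on {a..b} f"
    and "\<And>x. x \<in> {a<..<b} \<Longrightarrow> (f has_real_derivative f' x) (at x)"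
    and "\<And>x. x \<in> {a<..<b} \<Longrightarrow> (f' has_real_derivative f'' x) (at x)"
    and "continuous_on {a<..<b} f''"
    and "(\<lambda>t. (f'' t)^2) integrable_on {a..b}"
  shows "\<bar>(f a + f b) / 2 - (1 / (b - a)) * integral {a..b} f\<bar>
           \<le> (b - a) powr (3/2) / (2 * sqrt 3 * pi) * L2_norm_on a b f''"
proof -
  define E where "E = (b - a) / 2 * (f a + f b) - integral {a..b} f"
  have "0 \<le> L2_norm_on a b f''"
    using integral_nonneg[OF assms(6)] by (simp add: L2_norm_on_def)
  have "\<bar>(f a + f b) / 2 - (1 / (b - a)) * integral {a..b} f\<bar> = \<bar>E\<bar> / (b - a)"
    using \<open>a < b\<close> by (simp add: E_def field_simps)
  also have "\<dots> \<le> sqrt ((b - a)^5 / 120) * L2_norm_on a b f'' / (b - a)"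
    unfolding E_def using assms
    by (intro divide_right_mono trapezoid_error_le_L2_norm) auto
  also have "\<dots> = sqrt ((b - a)^5 / 120) / (b - a) * L2_norm_on a b f''" by simp
  also have "\<dots> \<le> (b - a) powr (3/2) / (2 * sqrt 3 * pi) * L2_norm_on a b f''"
    using sqrt_fifth_power_div_120_le \<open>a < b\<close> \<open>0 \<le> L2_norm_on a b f''\<close>
    by (intro mult_right_mono) auto
  finally show ?thesis .
qed

end
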